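(* Let $H=\bigcup_{j=1}^n(c_j,d_j)\subset\mathbb R$ with pairwise disjoint closed intervals $[c_j,d_j]$, let $\mathcal B$ be finite and $m\ge2$. Assume for each $\beta\in\mathcal B$: $b_\beta,\theta_\beta\in C^m(\bar H)$, $b_\beta>0$ on $\bar H$, $\theta_\beta(H)\subset H$; and there exist $\mu\ge1$ and $\kappa<1$ with $|\theta_\omega(x)-\theta_\omega(y)|\le\kappa|x-y|$ for all $\omega\in\mathcal B_\mu$, $x,y\in\bar H$. Let $C_1=\sup\{|Db_\beta(x)|/b_\beta(x):\beta\in\mathcal B,x\in H\}$, $C_2=\sup\{|D^2b_\beta(x)|/b_\beta(x):\beta\in\mathcal B,x\in H\}$, $M_0=\sup\{|D^2\theta_\beta(x)|:\beta\in\mathcal B,x\in\bar H\}$, $\epsilon_0=1$ and $\epsilon_\nu=\sup\{|\theta_\omega(x)-\theta_\omega(y)|/|x-y|:\omega\in\mathcal B_\nu,x,y\in H,x\neq y\}$ for $\nu\ge1$. Then for $s>0$, every $\nu\ge1$, every $\omega\in\mathcal B_\nu$ and $x\in\bar H$, $$\frac{D^2(b_\omega(x)^s)}{b_\omega(x)^s}\le s^2C_1^2\Big(\sum_{k=0}^\infty\epsilon_k\Big)^2+s\Big(\sum_{k=0}^\infty\epsilon_k^2\Big)\Big[C_2+C_1M_0\sum_{k=0}^\infty\epsilon_k\Big]$$ and $$\frac{D^2(b_\omega(x)^s)}{b_\omega(x)^s}\ge -s\Big(\sum_{k=0}^\infty\epsilon_k^2\Big)\Big[C_1^2+C_2+C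_1M_0\sum_{k=0}^\infty\epsilon_k\Big].$$
   Context: $D=d/dx$. $\mathcal B_\nu=\{(j_1,\ldots,j_\nu):j_k\in\mathcal B\}$; for $\omega=(j_1,\ldots,j_\nu)$, $\theta_\omega=\theta_{j_\nu}\circ\cdots\circ\theta_{j_1}$ and $b_\omega(x)=b_{j_\nu}(\theta_{(j_1,\ldots,j_{\nu-1})}(x))\cdots b_{j_2}(\theta_{j_1}(x))\,b_{j_1}(x)$. $C^m(\bar H)$ denotes real $C^m$ functions on $H$ whose derivatives of order $\le m$ extend continuously to $\bar H$. *)

theory Defs
  imports "HOL-Analysis.Analysis"
begin

definition union_intervals :: "nat \<Rightarrow> (nat \<Rightarrow> real) \<Rightarrow> (nat \<Rightarrow> real) \<Rightarrow> real set" where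
  "union_intervals n c d = (\<Union>j\<in>{1..n}. {c j<..<d j})"

text \<open>C^m(closure H): f is C^m on the open set H and all derivatives of order at most m
  extend continuously to closure H. g k is the (extended) k-th derivative, g 0 = f.\<close>
definition Cm_bar :: "nat \<Rightarrow> real set \<Rightarrow> (real \<Rightarrow> real) \<Rightarrow> bool" where
  "Cm_bar m H f \<longleftrightarrow>
     (\<exists>g :: nat \<Rightarrow> real \<Rightarrow> real. g 0 = f \<and>
        (\<forall>k<m. \<forall>x\<in>H. (g k has_real_derivative g (Suc k) x) (at x)) \<and>
        (\<forall>k\<le>m. continuous_on (closure H) (g k)))"

text \<open>Words of length nu over B; a word [j1,...,jnu] is applied j1 first.\<close>
definition words :: "'b set \<Rightarrow> nat \<Rightarrow> 'b list set" where
  "words B nu = {w. length w = nu \<and> set w \<subseteq> B}"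

primrec theta_comp :: "('b \<Rightarrow> real \<Rightarrow> real) \<Rightarrow> 'b list \<Rightarrow> real \<Rightarrow> real" where
  "theta_comp \<theta> [] = id"
| "theta_comp \<theta> (j # js) = theta_comp \<theta> js \<circ> \<theta> j"

primrec b_comp :: "('b \<Rightarrow> real \<Rightarrow> real) \<Rightarrow> ('b \<Rightarrow> real \<Rightarrow> real) \<Rightarrow> 'b list \<Rightarrow> real \<Rightarrow> real" where
  "b_comp b \<theta> [] x = 1"
| "b_comp b \<theta> (j # js) x = b_comp b \<theta> js (\<theta> j x) * b j x"

definition const_C1 :: "'b set \<Rightarrow> ('b \<Rightarrow> real \<Rightarrow> real) \<Rightarrow> real set \<Rightarrow> real" where
  "const_C1 B b H = Sup {\<bar>deriv (b \<beta>) x\<bar> / b \<beta> x | \<beta> x. \<beta> \<in> B \<and> x \<in> H}"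

definition const_C2 :: "'b set \<Rightarrow> ('b \<Rightarrow> real \<Rightarrow> real) \<Rightarrow> real set \<Rightarrow> real" where
  "const_C2 B b H = Sup {\<bar>deriv (deriv (b \<beta>)) x\<bar> / b \<beta> x | \<beta> x. \<beta> \<in> B \<and> x \<in> H}"

text \<open>M0: sup of |D^2 theta_beta| over closure H; the continuous extension of D^2 theta_beta
  to closure H has the same supremum as D^2 theta_beta on H, so we take the sup over H.\<close>
definition const_M0 :: "'b set \<Rightarrow> ('b \<Rightarrow> real \<Rightarrow> real) \<Rightarrow> real set \<Rightarrow> real" where
  "const_M0 B \<theta> H = Sup {\<bar>deriv (deriv (\<theta> \<beta>)) x\<bar> | \<beta> x. \<beta> \<in> B \<and> x \<in> H}"

definition eps :: "'b set \<Rightarrow> ('b \<Rightarrow> real \<Rightarrow> real) \<Rightarrow> real set \<Rightarrow> nat \<Rightarrow> real" where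
  "eps B \<theta> H nu = (if nu = 0 then 1 else
     Sup {\<bar>theta_comp \<theta> w x - theta_comp \<theta> w y\<bar> / \<bar>x - y\<bar> | w x y.
            w \<in> words B nu \<and> x \<in> H \<and> y \<in> H \<and> x \<noteq> y})"

end

theory Submission
  imports Defs
begin

(* Along the orbit, ln b_w = (SUM k. ln b_(w!k) o theta_(take k w)), and
   D^2 (b_w^s) / b_w^s = s D^2 (ln b_w) + s^2 (D (ln b_w))^2.  Differentiating termwise, each term
   only involves b'/b and b''/b at orbit points and the first and second derivatives of the partial
   compositions theta_(take k w).  The first derivative is bounded by the Lipschitz ratio eps k, and
   the second-order chain rule bounds the second by M0 (SUM i<k. eps (k-1-i) * (eps i)^2), so summing
   over k (a Cauchy product) yields the stated bounds in terms of the series of eps k and (eps k)^2.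
   These converge because eps is submultiplicative with eps mu <= kappa < 1.  The estimate is proved
   on the open set H and passes to the endpoints of the intervals by the mean value theorem. *)

lemma summable_submultiplicative:
  fixes e :: "nat \<Rightarrow> real"
  assumes nonneg: "\<And>k. 0 \<le> e k" and submult: "\<And>a b. e (a + b) \<le> e a * e b"
    and "1 \<le> \<mu>" and "e \<mu> < 1"
  shows "summable e"
proof -
  define \<kappa> where "\<kappa> = max (e \<mu>) (1/2)"
  have \<kappa>: "0 < \<kappa>" "\<kappa> < 1" "e \<mu> \<le> \<kappa>" using assms by (auto simp: \<kappa>_def)
  define \<rho> where "\<rho> = root \<mu> \<kappa>"
  have \<rho>: "0 < \<rho>" "\<rho> < 1" "\<rho> ^ \<mu> = \<kappa>"
    using \<kappa> \<open>1 \<le> \<mu>\<close> by (auto simp: \<rho>_def real_root_gt_zero)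
  define E where "E = Max (e ` {..<\<mu>})"
  have E: "e r \<le> E" if "r < \<mu>" for r unfolding E_def using that by (intro Max_ge) auto
  have block: "e (q * \<mu> + r) \<le> \<kappa> ^ q * E" if "r < \<mu>" for q r
  proof (induction q)
    case (Suc q)
    have "e (Suc q * \<mu> + r) \<le> e \<mu> * e (q * \<mu> + r)"
      using submult[of \<mu> "q * \<mu> + r"] by (simp add: add.assoc)
    also have "\<dots> \<le> \<kappa> * (\<kappa> ^ q * E)" using \<kappa> Suc nonneg by (intro mult_mono) auto
    finally show ?case by simp
  qed (use E that in simp)
  have geometric_bound: "norm (e k) \<le> (E / \<kappa>) * \<rho> ^ k" for k
  proof -
    define q r where "q = k div \<mu>" and "r = k mod \<mu>"
    have k: "k = q * \<mu> + r" and r: "r < \<mu>" using \<open>1 \<le> \<mu>\<close> by (simp_all add: q_def r_def)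
    have "0 \<le> E" using E[OF r] nonneg[of r] by linarith
    have "\<kappa> ^ (q + 1) = \<rho> ^ ((q + 1) * \<mu>)" by (metis \<rho>(3) mult.commute power_mult)
    also have "\<dots> \<le> \<rho> ^ k" using \<rho> k r by (intro power_decreasing) auto
    finally have "\<kappa> ^ q \<le> \<rho> ^ k / \<kappa>" using \<kappa> by (simp add: field_simps)
    then have "e k \<le> (\<rho> ^ k / \<kappa>) * E"
      using block[OF r] k \<open>0 \<le> E\<close> by (metis mult_right_mono order_trans)
    then show ?thesis using nonneg[of k] by (simp add: ac_simps)
  qed
  show ?thesis
    by (rule summable_comparison_test'[OF summable_mult[OF summable_geometric] geometric_bound])
      (use \<rho> in auto)
qed

lemma summable_power2_nonneg:
  fixes e :: "nat \<Rightarrow> real"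
  assumes "summable e" "\<And>k. 0 \<le> e k"
  shows "summable (\<lambda>k. (e k)\<^sup>2)"
proof -
  obtain N where N: "\<And>k. k \<ge> N \<Longrightarrow> e k < 1"
    using order_tendstoD(2)[OF summable_LIMSEQ_zero[OF assms(1)], of 1]
    by (auto simp: eventually_sequentially)
  show ?thesis
    by (rule summable_comparison_test'[OF assms(1), of N])
      (use N assms(2) in \<open>simp add: power2_eq_square mult_left_le less_imp_le\<close>)
qed

lemma sum_convolution_le:
  fixes a c :: "nat \<Rightarrow> real"
  assumes "\<And>k. 0 \<le> a k" "\<And>k. 0 \<le> c k"
  shows "(\<Sum>k<n. \<Sum>i<k. a (k - 1 - i) * c i) \<le> (\<Sum>k<n. a k) * (\<Sum>k<n. c k)"
proof -
  have "(\<Sum>k<n. \<Sum>i<k. a (k - 1 - i) * c i) \<le> (\<Sum>k\<le>n. \<Sum>i<k. a (k - 1 - i) * c i)"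
    by (rule sum_mono2) (auto intro!: sum_nonneg mult_nonneg_nonneg assms)
  also have "\<dots> = (\<Sum>i<n. (\<Sum>k=Suc i..n. a (k - 1 - i)) * c i)"
    by (simp add: sum.nested_swap' sum_distrib_right)
  also have "\<dots> \<le> (\<Sum>i<n. (\<Sum>k<n. a k) * c i)"
  proof (intro sum_mono mult_right_mono assms)
    fix i assume i: "i \<in> {..<n}"
    have "inj_on (\<lambda>k. k - 1 - i) {Suc i..n}" by (auto simp: inj_on_def)
    then have "(\<Sum>k=Suc i..n. a (k - 1 - i)) = sum a ((\<lambda>k. k - 1 - i) ` {Suc i..n})"
      by (simp add: sum.reindex)
    also have "\<dots> \<le> sum a {..<n}" using i by (intro sum_mono2) (auto intro: assms)
    finally show "(\<Sum>k=Suc i..n. a (k - 1 - i)) \<le> sum a {..<n}" .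
  qed
  also have "\<dots> = (\<Sum>k<n. a k) * (\<Sum>k<n. c k)" by (simp add: sum_distrib_left)
  finally show ?thesis .
qed

lemma abs_derivative_le_lipschitz:
  fixes f :: "real \<Rightarrow> real"
  assumes "(f has_real_derivative D) (at x)" "open U" "x \<in> U"
    and "\<And>y. y \<in> U \<Longrightarrow> \<bar>f y - f x\<bar> \<le> L * \<bar>y - x\<bar>"
  shows "\<bar>D\<bar> \<le> L"
proof -
  have "((\<lambda>y. \<bar>(f y - f x) / (y - x)\<bar>) \<longlongrightarrow> \<bar>D\<bar>) (at x)"
    using assms(1) unfolding has_field_derivative_iff by (rule tendsto_rabs)
  moreover have "eventually (\<lambda>y. y \<in> U \<and> y \<noteq> x) (at x)"
    using assms(2,3) eventually_at_topological by blast
  then have "eventually (\<lambda>y. \<bar>(f y - f x) / (y - x)\<bar> \<le> L) (at x)"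
    by eventually_elim (use assms(4) in \<open>auto simp: abs_divide pos_divide_le_eq\<close>)
  ultimately show ?thesis by (rule tendsto_upperbound) simp
qed

(* At an endpoint, f x is a one-sided limit of difference quotients of F, and each of these equals
   f at an interior point by the mean value theorem. *)
lemma has_real_derivative_le_on_Icc:
  fixes F f g :: "real \<Rightarrow> real"
  assumes "c < d" and x: "x \<in> {c..d}"
    and F: "\<And>y. y \<in> {c..d} \<Longrightarrow> (F has_real_derivative f y) (at y within {c..d})"
    and f_le_g: "\<And>z. z \<in> {c<..<d} \<Longrightarrow> f z \<le> g z"
    and g: "continuous (at x within {c..d}) g"
  shows "f x \<le> g x"
proof (rule field_le_epsilon)
  fix e :: real assume "0 < e"
  then obtain \<delta> where "\<delta> > 0" and \<delta>: "\<And>z. z \<in> {c..d} \<Longrightarrow> dist z x < \<delta> \<Longrightarrow> g z < g x + e"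
    using g unfolding continuous_within_eps_delta by (force simp: dist_real_def)
  have "(F has_real_derivative f x) (at x within {c<..<d})"
    using F[OF x] by (rule has_field_derivative_subset) auto
  then have lim: "((\<lambda>y. (F y - F x) / (y - x)) \<longlongrightarrow> f x) (at x within {c<..<d})"
    unfolding has_field_derivative_iff .
  have "x islimpt closure {c<..<d}" using x \<open>c < d\<close> by (simp add: closure_greaterThanLessThan)
  then have "x islimpt {c<..<d}" by (simp only: limpt_of_closure)
  then have nontrivial: "at x within {c<..<d} \<noteq> bot" by (simp add: trivial_limit_within)
  have "eventually (\<lambda>y. (F y - F x) / (y - x) \<le> g x + e) (at x within {c<..<d})"
    unfolding eventually_at
  proof (intro exI conjI ballI impI)
    fix y assume y: "y \<in> {c<..<d}" "y \<noteq> x \<and> dist y x < \<delta>"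
    define a b where "a = min x y" and "b = max x y"
    have "a < b" "{a..b} \<subseteq> {c..d}" using x y by (auto simp: a_def b_def)
    moreover have "(F has_derivative (\<lambda>h. f z * h)) (at z within {a..b})" if "z \<in> {a..b}" for z
      using F has_field_derivative_subset \<open>{a..b} \<subseteq> {c..d}\<close> that
      unfolding has_field_derivative_def by (metis subsetD mult.commute)
    ultimately obtain z where z: "z \<in> {a<..<b}" and mvt: "F b - F a = f z * (b - a)"
      using mvt_simple[of a b F "\<lambda>z h. f z * h"] by auto
    have "z \<in> {c<..<d}" "dist z x < \<delta>"
      using z x y by (auto simp: a_def b_def dist_real_def)
    have "(F y - F x) / (y - x) = f z"
      using mvt y \<open>a < b\<close> unfolding a_def b_def
      by (cases "x < y") (auto simp: min_def max_def field_simps)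
    also have "\<dots> \<le> g z" using f_le_g \<open>z \<in> {c<..<d}\<close> .
    also have "\<dots> < g x + e" using \<delta> \<open>z \<in> {c<..<d}\<close> \<open>dist z x < \<delta>\<close> by auto
    finally show "(F y - F x) / (y - x) \<le> g x + e" by simp
  qed (rule \<open>\<delta> > 0\<close>)
  then show "f x \<le> g x + e" using tendsto_upperbound[OF lim _ nontrivial] by simp
qed

lemma deriv_eq_on_open:
  assumes "open H" "x \<in> H"
    and f: "\<And>y. y \<in> H \<Longrightarrow> (f has_real_derivative f' y) (at y)"
    and f': "\<And>y. y \<in> H \<Longrightarrow> (f' has_real_derivative f'' y) (at y)"
  shows "deriv f x = f' x" and "deriv (deriv f) x = f'' x"
proof -
  show "deriv f x = f' x" using f[OF \<open>x \<in> H\<close>] by (rule DERIV_imp_deriv)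
  have "(deriv f has_real_derivative f'' x) (at x)"
    by (rule has_field_derivative_transform_within_open[OF f'[OF \<open>x \<in> H\<close>] assms(1,2)])
      (use f DERIV_imp_deriv in metis)
  then show "deriv (deriv f) x = f'' x" by (rule DERIV_imp_deriv)
qed

lemma le_Sup_continuous_family:
  fixes g :: "'b \<Rightarrow> 'a::metric_space \<Rightarrow> real"
  assumes "finite B" "compact K" "H \<subseteq> K" and g: "\<And>\<beta>. \<beta> \<in> B \<Longrightarrow> continuous_on K (g \<beta>)"
    and fg: "\<And>\<beta> x. \<beta> \<in> B \<Longrightarrow> x \<in> H \<Longrightarrow> f \<beta> x = g \<beta> x" and "\<beta> \<in> B" "x \<in> H"
  shows "f \<beta> x \<le> Sup {f \<beta> x | \<beta> x. \<beta> \<in> B \<and> x \<in> H}"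
proof (rule cSup_upper)
  show "f \<beta> x \<in> {f \<beta> x | \<beta> x. \<beta> \<in> B \<and> x \<in> H}" using assms by blast
  have "bounded (\<Union>\<beta>\<in>B. g \<beta> ` K)"
    using assms(1,2) g by (auto intro!: bounded_UN compact_imp_bounded compact_continuous_image)
  moreover have "{f \<beta> x | \<beta> x. \<beta> \<in> B \<and> x \<in> H} \<subseteq> (\<Union>\<beta>\<in>B. g \<beta> ` K)"
    using fg \<open>H \<subseteq> K\<close> by blast
  ultimately show "bdd_above {f \<beta> x | \<beta> x. \<beta> \<in> B \<and> x \<in> H}"
    by (meson bdd_above_mono bounded_imp_bdd_above)
qed

section \<open>Compositions along words\<close>

lemma theta_comp_append: "theta_comp \<theta> (u @ v) = theta_comp \<theta> v \<circ> theta_comp \<theta> u"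
  by (induction u) (auto simp: fun_eq_iff)

lemma b_comp_eq_prod:
  "b_comp b \<theta> w x = (\<Prod>k<length w. b (w!k) (theta_comp \<theta> (take k w) x))"
proof (induction w arbitrary: x)
  case (Cons j js)
  show ?case unfolding length_Cons prod.lessThan_Suc_shift by (simp add: Cons mult.commute)
qed simp

locale ifs =
  fixes B :: "'b set" and H :: "real set" and \<theta> :: "'b \<Rightarrow> real \<Rightarrow> real"
  assumes open_H: "open H"
    and \<theta>_in_H: "\<beta> \<in> B \<Longrightarrow> x \<in> H \<Longrightarrow> \<theta> \<beta> x \<in> H"
begin

lemma theta_comp_in_H: "set w \<subseteq> B \<Longrightarrow> x \<in> H \<Longrightarrow> theta_comp \<theta> w x \<in> H"
  by (induction w arbitrary: x) (auto simp: \<theta>_in_H)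

end

(* Nonemptiness keeps the suprema defining eps away from the junk value Sup {}. *)
locale lipschitz_ifs = ifs +
  fixes L :: real
  assumes B_ne: "B \<noteq> {}" and H_ne: "H \<noteq> {}"
    and \<theta>_lipschitz: "\<beta> \<in> B \<Longrightarrow> L-lipschitz_on H (\<theta> \<beta>)"
begin

lemma theta_comp_lipschitz: "set w \<subseteq> B \<Longrightarrow> (L ^ length w)-lipschitz_on H (theta_comp \<theta> w)"
proof (induction w)
  case Nil
  show ?case using lipschitz_on_id by (simp add: id_def)
next
  case (Cons j js)
  have "L-lipschitz_on H (\<theta> j)" and "\<theta> j ` H \<subseteq> H"
    using Cons.prems \<theta>_lipschitz \<theta>_in_H by auto
  then have "(L ^ length js * L)-lipschitz_on H (theta_comp \<theta> js \<circ> \<theta> j)"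
    using Cons by (intro lipschitz_on_compose) (auto intro: lipschitz_on_subset)
  then show ?case by (simp add: mult.commute)
qed

definition diff_quotients :: "nat \<Rightarrow> real set" where
  "diff_quotients \<nu> = {\<bar>theta_comp \<theta> w x - theta_comp \<theta> w y\<bar> / \<bar>x - y\<bar> | w x y.
      w \<in> words B \<nu> \<and> x \<in> H \<and> y \<in> H \<and> x \<noteq> y}"

lemma eps_eq_Sup: "\<nu> \<noteq> 0 \<Longrightarrow> eps B \<theta> H \<nu> = Sup (diff_quotients \<nu>)"
  unfolding eps_def diff_quotients_def by simp

lemma bdd_above_diff_quotients: "bdd_above (diff_quotients \<nu>)"
proof (rule bdd_aboveI)
  fix q assume "q \<in> diff_quotients \<nu>"
  then obtain w x y where q: "q = \<bar>theta_comp \<theta> w x - theta_comp \<theta> w y\<bar> / \<bar>x - y\<bar>"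
    and w: "w \<in> words B \<nu>" and xy: "x \<in> H" "y \<in> H" "x \<noteq> y"
    unfolding diff_quotients_def by blast
  have "\<bar>theta_comp \<theta> w x - theta_comp \<theta> w y\<bar> \<le> L ^ \<nu> * \<bar>x - y\<bar>"
    using theta_comp_lipschitz[of w] w xy by (auto simp: words_def lipschitz_on_def dist_real_def)
  then show "q \<le> L ^ \<nu>" using xy by (simp add: q pos_divide_le_eq)
qed

lemma diff_quotients_ne: "diff_quotients \<nu> \<noteq> {}"
proof -
  obtain x r where x: "x \<in> H" and r: "r > 0" "ball x r \<subseteq> H"
    using H_ne open_H open_contains_ball by blast
  have y: "x + r / 2 \<in> H" using r by (auto simp: dist_real_def intro!: subsetD[OF r(2)])
  obtain \<beta> where "\<beta> \<in> B" using B_ne by blast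
  then have "replicate \<nu> \<beta> \<in> words B \<nu>" by (auto simp: words_def)
  then show ?thesis using x y r unfolding diff_quotients_def by fastforce
qed

lemma eps_nonneg: "0 \<le> eps B \<theta> H \<nu>"
proof (cases "\<nu> = 0")
  case False
  obtain q where q: "q \<in> diff_quotients \<nu>" using diff_quotients_ne by blast
  have "0 \<le> q" using q unfolding diff_quotients_def by auto
  also have "q \<le> Sup (diff_quotients \<nu>)" by (rule cSup_upper[OF q bdd_above_diff_quotients])
  finally show ?thesis using eps_eq_Sup[OF False] by simp
qed (simp add: eps_def)

lemma theta_comp_diff_le_eps:
  assumes "set w \<subseteq> B" "x \<in> H" "y \<in> H"
  shows "\<bar>theta_comp \<theta> w x - theta_comp \<theta> w y\<bar> \<le> eps B \<theta> H (length w) * \<bar>x - y\<bar>"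
proof (cases "x = y \<or> w = []")
  case False
  then have "\<bar>theta_comp \<theta> w x - theta_comp \<theta> w y\<bar> / \<bar>x - y\<bar> \<in> diff_quotients (length w)"
    unfolding diff_quotients_def words_def using assms by blast
  then have "\<bar>theta_comp \<theta> w x - theta_comp \<theta> w y\<bar> / \<bar>x - y\<bar> \<le> eps B \<theta> H (length w)"
    using cSup_upper[OF _ bdd_above_diff_quotients] eps_eq_Sup False by simp
  then show ?thesis using False by (simp add: pos_divide_le_eq)
qed (auto simp: eps_def)

lemma eps_add_le_mult: "eps B \<theta> H (a + b) \<le> eps B \<theta> H a * eps B \<theta> H b"
proof (cases "a + b = 0")
  case False
  have "Sup (diff_quotients (a + b)) \<le> eps B \<theta> H a * eps B \<theta> H b"
  proof (rule cSup_least[OF diff_quotients_ne])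
    fix q assume "q \<in> diff_quotients (a + b)"
    then obtain w x y where q: "q = \<bar>theta_comp \<theta> w x - theta_comp \<theta> w y\<bar> / \<bar>x - y\<bar>"
      and w: "w \<in> words B (a + b)" and xy: "x \<in> H" "y \<in> H" "x \<noteq> y"
      unfolding diff_quotients_def by blast
    define u v where "u = take a w" and "v = drop a w"
    have uv: "set u \<subseteq> B" "set v \<subseteq> B" "length u = a" "length v = b"
      using w by (auto simp: u_def v_def words_def dest: in_set_takeD in_set_dropD)
    have "\<bar>theta_comp \<theta> w x - theta_comp \<theta> w y\<bar>
        = \<bar>theta_comp \<theta> v (theta_comp \<theta> u x) - theta_comp \<theta> v (theta_comp \<theta> u y)\<bar>"
      by (metis append_take_drop_id comp_apply theta_comp_append u_def v_def)
    also have "\<dots> \<le> eps B \<theta> H b * \<bar>theta_comp \<theta> u x - theta_comp \<theta> u y\<bar>"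
      using theta_comp_diff_le_eps[of v] uv theta_comp_in_H xy by simp
    also have "\<dots> \<le> eps B \<theta> H b * (eps B \<theta> H a * \<bar>x - y\<bar>)"
      using theta_comp_diff_le_eps[of u x y] uv xy eps_nonneg by (intro mult_left_mono) auto
    finally show "q \<le> eps B \<theta> H a * eps B \<theta> H b"
      using xy by (simp add: q pos_divide_le_eq ac_simps)
  qed
  then show ?thesis using eps_eq_Sup[OF False] by simp
qed (simp add: eps_def)

lemma eps_le_contraction_factor:
  assumes "1 \<le> \<mu>" and "\<forall>w\<in>words B \<mu>. \<forall>x\<in>H. \<forall>y\<in>H.
      \<bar>theta_comp \<theta> w x - theta_comp \<theta> w y\<bar> \<le> \<kappa> * \<bar>x - y\<bar>"
  shows "eps B \<theta> H \<mu> \<le> \<kappa>"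
proof -
  have "Sup (diff_quotients \<mu>) \<le> \<kappa>"
    using assms(2) by (intro cSup_least[OF diff_quotients_ne])
      (auto simp: diff_quotients_def pos_divide_le_eq)
  then show ?thesis using eps_eq_Sup assms(1) by simp
qed

lemma contraction_imp_summable_eps:
  assumes "1 \<le> \<mu>" "\<kappa> < 1"
    and "\<forall>w\<in>words B \<mu>. \<forall>x\<in>H. \<forall>y\<in>H. \<bar>theta_comp \<theta> w x - theta_comp \<theta> w y\<bar> \<le> \<kappa> * \<bar>x - y\<bar>"
  shows "summable (eps B \<theta> H)"
  using eps_le_contraction_factor[OF assms(1,3)] assms(1,2)
  by (intro summable_submultiplicative[OF eps_nonneg eps_add_le_mult, of \<mu>]) auto

end

locale smooth_weighted_ifs = ifs +
  fixes \<theta>' \<theta>'' b b' b'' :: "'b \<Rightarrow> real \<Rightarrow> real"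
  assumes \<theta>_deriv: "\<beta> \<in> B \<Longrightarrow> x \<in> H \<Longrightarrow> (\<theta> \<beta> has_real_derivative \<theta>' \<beta> x) (at x)"
    and \<theta>'_deriv: "\<beta> \<in> B \<Longrightarrow> x \<in> H \<Longrightarrow> (\<theta>' \<beta> has_real_derivative \<theta>'' \<beta> x) (at x)"
    and b_deriv: "\<beta> \<in> B \<Longrightarrow> x \<in> H \<Longrightarrow> (b \<beta> has_real_derivative b' \<beta> x) (at x)"
    and b'_deriv: "\<beta> \<in> B \<Longrightarrow> x \<in> H \<Longrightarrow> (b' \<beta> has_real_derivative b'' \<beta> x) (at x)"
    and b_pos: "\<beta> \<in> B \<Longrightarrow> x \<in> H \<Longrightarrow> 0 < b \<beta> x"
begin

primrec comp_deriv :: "'b list \<Rightarrow> real \<Rightarrow> real" where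
  "comp_deriv [] x = 1"
| "comp_deriv (j # js) x = comp_deriv js (\<theta> j x) * \<theta>' j x"

primrec comp_deriv2 :: "'b list \<Rightarrow> real \<Rightarrow> real" where
  "comp_deriv2 [] x = 0"
| "comp_deriv2 (j # js) x =
     comp_deriv2 js (\<theta> j x) * (\<theta>' j x)\<^sup>2 + comp_deriv js (\<theta> j x) * \<theta>'' j x"

lemma has_real_derivative_theta_comp:
  "set w \<subseteq> B \<Longrightarrow> x \<in> H \<Longrightarrow> (theta_comp \<theta> w has_real_derivative comp_deriv w x) (at x)"
proof (induction w arbitrary: x)
  case (Cons j js)
  then have "(theta_comp \<theta> js has_real_derivative comp_deriv js (\<theta> j x)) (at (\<theta> j x))"
    using \<theta>_in_H by simp
  from DERIV_chain[OF this \<theta>_deriv] Cons.prems show ?case by (simp add: o_def)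
qed (simp add: id_def)

lemma has_real_derivative_comp_deriv:
  "set w \<subseteq> B \<Longrightarrow> x \<in> H \<Longrightarrow> (comp_deriv w has_real_derivative comp_deriv2 w x) (at x)"
proof (induction w arbitrary: x)
  case Nil
  have "comp_deriv [] = (\<lambda>_. 1)" by (rule ext) simp
  then show ?case by simp
next
  case (Cons j js)
  then have j: "j \<in> B" "\<theta> j x \<in> H" using \<theta>_in_H by auto
  have "((\<lambda>y. comp_deriv js (\<theta> j y)) has_real_derivative comp_deriv2 js (\<theta> j x) * \<theta>' j x) (at x)"
    using DERIV_chain2[OF Cons.IH \<theta>_deriv] Cons.prems j by simp
  from DERIV_mult[OF this \<theta>'_deriv[OF j(1) Cons.prems(2)]]
  have "((\<lambda>y. comp_deriv js (\<theta> j y) * \<theta>' j y) has_real_derivative comp_deriv2 (j # js) x) (at x)"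
    by (simp add: power2_eq_square algebra_simps)
  moreover have "comp_deriv (j # js) = (\<lambda>y. comp_deriv js (\<theta> j y) * \<theta>' j y)" by (rule ext) simp
  ultimately show ?case by simp
qed

lemma chain_rule_theta_comp:
  assumes g: "\<And>z. z \<in> H \<Longrightarrow> (g has_real_derivative g' z) (at z)"
    and g': "\<And>z. z \<in> H \<Longrightarrow> (g' has_real_derivative g'' z) (at z)"
    and p: "set p \<subseteq> B" and x: "x \<in> H"
  shows "((\<lambda>y. g (theta_comp \<theta> p y)) has_real_derivative
           g' (theta_comp \<theta> p x) * comp_deriv p x) (at x)"
    and "((\<lambda>y. g' (theta_comp \<theta> p y) * comp_deriv p y) has_real_derivative
           g'' (theta_comp \<theta> p x) * (comp_deriv p x)\<^sup>2 + g' (theta_comp \<theta> p x) * comp_deriv2 p x) (at x)"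
proof -
  have z: "theta_comp \<theta> p x \<in> H" using theta_comp_in_H[OF p x] .
  note \<theta>p = has_real_derivative_theta_comp[OF p x]
  show "((\<lambda>y. g (theta_comp \<theta> p y)) has_real_derivative
           g' (theta_comp \<theta> p x) * comp_deriv p x) (at x)"
    using DERIV_chain2[OF g[OF z] \<theta>p] .
  show "((\<lambda>y. g' (theta_comp \<theta> p y) * comp_deriv p y) has_real_derivative
           g'' (theta_comp \<theta> p x) * (comp_deriv p x)\<^sup>2 + g' (theta_comp \<theta> p x) * comp_deriv2 p x) (at x)"
    using DERIV_mult[OF DERIV_chain2[OF g'[OF z] \<theta>p] has_real_derivative_comp_deriv[OF p x]]
    by (simp add: power2_eq_square algebra_simps)
qed

definition ln_b' :: "'b \<Rightarrow> real \<Rightarrow> real" where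
  "ln_b' \<beta> y = b' \<beta> y / b \<beta> y"

definition ln_b'' :: "'b \<Rightarrow> real \<Rightarrow> real" where
  "ln_b'' \<beta> y = b'' \<beta> y / b \<beta> y - (ln_b' \<beta> y)\<^sup>2"

lemma has_real_derivative_ln_b:
  assumes "\<beta> \<in> B" "x \<in> H"
  shows "((\<lambda>y. ln (b \<beta> y)) has_real_derivative ln_b' \<beta> x) (at x)"
    and "(ln_b' \<beta> has_real_derivative ln_b'' \<beta> x) (at x)"
proof -
  have pos: "0 < b \<beta> x" using b_pos assms .
  show "((\<lambda>y. ln (b \<beta> y)) has_real_derivative ln_b' \<beta> x) (at x)"
    using DERIV_chain2[OF DERIV_ln_divide[OF pos] b_deriv[OF assms]] by (simp add: ln_b'_def)
  have "(ln_b' \<beta> has_real_derivative (b'' \<beta> x * b \<beta> x - b' \<beta> x * b' \<beta> x) / (b \<beta> x * b \<beta> x)) (at x)"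
    unfolding ln_b'_def[abs_def] using DERIV_divide[OF b'_deriv[OF assms] b_deriv[OF assms]] pos
    by simp
  then show "(ln_b' \<beta> has_real_derivative ln_b'' \<beta> x) (at x)"
    using pos by (simp add: ln_b''_def ln_b'_def field_simps power2_eq_square)
qed

(* The derivatives of ln b_w, read off termwise from ln_b_comp_eq_sum. *)
definition ln_b_comp' :: "'b list \<Rightarrow> real \<Rightarrow> real" where
  "ln_b_comp' w x =
     (\<Sum>k<length w. ln_b' (w!k) (theta_comp \<theta> (take k w) x) * comp_deriv (take k w) x)"

definition ln_b_comp'' :: "'b list \<Rightarrow> real \<Rightarrow> real" where
  "ln_b_comp'' w x =
     (\<Sum>k<length w. ln_b'' (w!k) (theta_comp \<theta> (take k w) x) * (comp_deriv (take k w) x)\<^sup>2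
                   + ln_b' (w!k) (theta_comp \<theta> (take k w) x) * comp_deriv2 (take k w) x)"

lemma b_nth_theta_comp_pos:
  "set w \<subseteq> B \<Longrightarrow> x \<in> H \<Longrightarrow> k < length w \<Longrightarrow> 0 < b (w!k) (theta_comp \<theta> (take k w) x)"
  by (meson b_pos nth_mem set_take_subset subset_trans subsetD theta_comp_in_H)

lemma b_comp_pos: "set w \<subseteq> B \<Longrightarrow> x \<in> H \<Longrightarrow> 0 < b_comp b \<theta> w x"
  unfolding b_comp_eq_prod by (auto intro!: prod_pos b_nth_theta_comp_pos)

lemma ln_b_comp_eq_sum:
  "set w \<subseteq> B \<Longrightarrow> x \<in> H \<Longrightarrow>
     ln (b_comp b \<theta> w x) = (\<Sum>k<length w. ln (b (w!k) (theta_comp \<theta> (take k w) x)))"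
  unfolding b_comp_eq_prod by (rule ln_prod) (auto dest: b_nth_theta_comp_pos)

lemma has_real_derivative_ln_b_comp:
  assumes w: "set w \<subseteq> B" and x: "x \<in> H"
  shows "((\<lambda>y. ln (b_comp b \<theta> w y)) has_real_derivative ln_b_comp' w x) (at x)"
    and "(ln_b_comp' w has_real_derivative ln_b_comp'' w x) (at x)"
proof -
  have wk: "w!k \<in> B" "set (take k w) \<subseteq> B" if "k < length w" for k
    using w that by (auto dest: in_set_takeD)
  note chain = chain_rule_theta_comp[OF has_real_derivative_ln_b(1) has_real_derivative_ln_b(2)]
  have "((\<lambda>y. \<Sum>k<length w. ln (b (w!k) (theta_comp \<theta> (take k w) y)))
      has_real_derivative ln_b_comp' w x) (at x)"
    unfolding ln_b_comp'_def by (intro DERIV_sum chain(1)) (use wk x in auto)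
  then show "((\<lambda>y. ln (b_comp b \<theta> w y)) has_real_derivative ln_b_comp' w x) (at x)"
    by (rule has_field_derivative_transform_within_open[OF _ open_H x])
      (simp add: ln_b_comp_eq_sum[OF w])
  show "(ln_b_comp' w has_real_derivative ln_b_comp'' w x) (at x)"
    unfolding ln_b_comp'_def[abs_def] ln_b_comp''_def
    by (intro DERIV_sum chain(2)) (use wk x in auto)
qed

lemma powr_b_comp_second_derivative:
  assumes "open U" "U \<subseteq> H" "\<xi> \<in> U" and w: "set w \<subseteq> B"
    and F1: "\<And>y. y \<in> U \<Longrightarrow> ((\<lambda>z. b_comp b \<theta> w z powr s) has_real_derivative F1 y) (at y)"
    and F2: "(F1 has_real_derivative F2) (at \<xi>)"
  shows "F2 = (s * ln_b_comp'' w \<xi> + s\<^sup>2 * (ln_b_comp' w \<xi>)\<^sup>2) * b_comp b \<theta> w \<xi> powr s"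
proof -
  define P where "P y = b_comp b \<theta> w y powr s" for y
  define F1' where "F1' y = P y * (s * ln_b_comp' w y)" for y
  have dP: "(P has_real_derivative F1' y) (at y)" if y: "y \<in> H" for y
  proof (rule has_field_derivative_transform_within_open[OF _ open_H y])
    show "((\<lambda>y. exp (s * ln (b_comp b \<theta> w y))) has_real_derivative F1' y) (at y)"
      using DERIV_chain2[OF DERIV_exp DERIV_cmult[OF has_real_derivative_ln_b_comp(1)[OF w y]]]
        b_comp_pos[OF w y] by (simp add: F1'_def P_def powr_def)
    show "\<And>z. z \<in> H \<Longrightarrow> exp (s * ln (b_comp b \<theta> w z)) = P z"
      using b_comp_pos[OF w] by (simp add: P_def powr_def less_imp_neq[symmetric])
  qed
  have "(F1' has_real_derivative F2) (at \<xi>)"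
  proof (rule has_field_derivative_transform_within_open[OF F2 \<open>open U\<close> \<open>\<xi> \<in> U\<close>])
    show "\<And>y. y \<in> U \<Longrightarrow> F1 y = F1' y"
      using F1 dP \<open>U \<subseteq> H\<close> unfolding P_def by (meson DERIV_unique subsetD)
  qed
  moreover have "\<xi> \<in> H" using \<open>U \<subseteq> H\<close> \<open>\<xi> \<in> U\<close> by blast
  then have "((\<lambda>y. P y * (s * ln_b_comp' w y)) has_real_derivative
      P \<xi> * (s * ln_b_comp'' w \<xi>) + F1' \<xi> * (s * ln_b_comp' w \<xi>)) (at \<xi>)"
    by (intro DERIV_mult' dP DERIV_cmult has_real_derivative_ln_b_comp(2)[OF w])
  then have "(F1' has_real_derivative
      P \<xi> * (s * ln_b_comp'' w \<xi>) + F1' \<xi> * (s * ln_b_comp' w \<xi>)) (at \<xi>)"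
    by (simp only: F1'_def[abs_def])
  ultimately show ?thesis
    by (simp add: DERIV_unique F1'_def P_def power2_eq_square algebra_simps)
qed

end

section \<open>Bounds on the logarithmic derivatives\<close>

locale bounded_weighted_ifs =
  smooth_weighted_ifs B H \<theta> \<theta>' \<theta>'' b b' b'' + lipschitz_ifs B H \<theta> L
  for B :: "'b set" and H \<theta> \<theta>' \<theta>'' b b' b'' L +
  fixes C1 C2 M0 :: real
  assumes b'_bound: "\<beta> \<in> B \<Longrightarrow> x \<in> H \<Longrightarrow> \<bar>b' \<beta> x\<bar> / b \<beta> x \<le> C1"
    and b''_bound: "\<beta> \<in> B \<Longrightarrow> x \<in> H \<Longrightarrow> \<bar>b'' \<beta> x\<bar> / b \<beta> x \<le> C2"
    and \<theta>''_bound: "\<beta> \<in> B \<Longrightarrow> x \<in> H \<Longrightarrow> \<bar>\<theta>'' \<beta> x\<bar> \<le> M0"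
    and summable_eps: "summable (eps B \<theta> H)"
begin

abbreviation \<epsilon> :: "nat \<Rightarrow> real" where "\<epsilon> \<equiv> eps B \<theta> H"

abbreviation S :: real where "S \<equiv> \<Sum>k. \<epsilon> k"

abbreviation S2 :: real where "S2 \<equiv> \<Sum>k. (\<epsilon> k)\<^sup>2"

lemma partial_sums_eps_le: "(\<Sum>k<n. \<epsilon> k) \<le> S" "(\<Sum>k<n. (\<epsilon> k)\<^sup>2) \<le> S2"
  using sum_le_suminf[OF summable_eps] sum_le_suminf[OF summable_power2_nonneg[OF summable_eps]]
    eps_nonneg by auto

lemma bound_constants_nonneg: "0 \<le> C1" "0 \<le> C2" "0 \<le> M0" "0 \<le> S" "0 \<le> S2"
proof -
  obtain \<beta> x where "\<beta> \<in> B" "x \<in> H" using B_ne H_ne by blast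
  then show "0 \<le> C1" "0 \<le> C2" "0 \<le> M0"
    using b'_bound b''_bound \<theta>''_bound b_pos by (meson abs_ge_zero divide_nonneg_pos order_trans)+
  show "0 \<le> S" "0 \<le> S2"
    using partial_sums_eps_le[of 0] by simp_all
qed

lemma abs_ln_b'_le: "\<beta> \<in> B \<Longrightarrow> x \<in> H \<Longrightarrow> \<bar>ln_b' \<beta> x\<bar> \<le> C1"
  using b'_bound b_pos by (simp add: ln_b'_def abs_divide abs_of_pos)

lemma ln_b''_bounds:
  assumes "\<beta> \<in> B" "x \<in> H"
  shows "- (C1\<^sup>2 + C2) \<le> ln_b'' \<beta> x" "ln_b'' \<beta> x \<le> C2"
proof -
  have q: "\<bar>b'' \<beta> x / b \<beta> x\<bar> \<le> C2"
    using b''_bound[OF assms] b_pos[OF assms] by (simp add: abs_divide abs_of_pos)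
  have "(ln_b' \<beta> x)\<^sup>2 \<le> C1\<^sup>2"
    using abs_ln_b'_le[OF assms] by (metis abs_ge_zero power2_abs power_mono)
  then show "- (C1\<^sup>2 + C2) \<le> ln_b'' \<beta> x" "ln_b'' \<beta> x \<le> C2"
    unfolding ln_b''_def using abs_le_D1[OF q] abs_le_D2[OF q] zero_le_power2[of "ln_b' \<beta> x"]
    by linarith+
qed

lemma abs_comp_deriv_le_eps: "set p \<subseteq> B \<Longrightarrow> y \<in> H \<Longrightarrow> \<bar>comp_deriv p y\<bar> \<le> \<epsilon> (length p)"
  by (rule abs_derivative_le_lipschitz[OF has_real_derivative_theta_comp open_H])
    (auto intro: theta_comp_diff_le_eps)

lemma comp_deriv_sq_le_eps_sq: "set p \<subseteq> B \<Longrightarrow> y \<in> H \<Longrightarrow> (comp_deriv p y)\<^sup>2 \<le> (\<epsilon> (length p))\<^sup>2"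
  by (metis abs_comp_deriv_le_eps abs_ge_zero power2_abs power_mono)

lemma abs_comp_deriv2_le_sum:
  "set w \<subseteq> B \<Longrightarrow> x \<in> H \<Longrightarrow>
     \<bar>comp_deriv2 w x\<bar> \<le> M0 * (\<Sum>i<length w. \<epsilon> (length w - 1 - i) * (comp_deriv (take i w) x)\<^sup>2)"
proof (induction w arbitrary: x)
  case (Cons j js)
  define n where "n = length js"
  have j: "j \<in> B" "\<theta> j x \<in> H" and js: "set js \<subseteq> B" using Cons.prems \<theta>_in_H by auto
  have IH: "\<bar>comp_deriv2 js (\<theta> j x)\<bar> * (\<theta>' j x)\<^sup>2
      \<le> M0 * (\<Sum>i<n. \<epsilon> (n - 1 - i) * (comp_deriv (take i js) (\<theta> j x))\<^sup>2) * (\<theta>' j x)\<^sup>2"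
    using Cons.IH[OF js j(2)] by (simp add: n_def mult_right_mono)
  have "\<bar>comp_deriv js (\<theta> j x) * \<theta>'' j x\<bar> \<le> \<epsilon> n * M0"
    unfolding abs_mult n_def
    by (intro mult_mono abs_comp_deriv_le_eps \<theta>''_bound) (use j js Cons.prems eps_nonneg in auto)
  moreover have "\<bar>comp_deriv2 (j # js) x\<bar>
      \<le> \<bar>comp_deriv2 js (\<theta> j x)\<bar> * (\<theta>' j x)\<^sup>2 + \<bar>comp_deriv js (\<theta> j x) * \<theta>'' j x\<bar>"
    unfolding comp_deriv2.simps
    using abs_triangle_ineq[of "comp_deriv2 js (\<theta> j x) * (\<theta>' j x)\<^sup>2"
        "comp_deriv js (\<theta> j x) * \<theta>'' j x"]
    by (simp only: abs_mult abs_power2)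
  ultimately have "\<bar>comp_deriv2 (j # js) x\<bar>
      \<le> M0 * (\<Sum>i<n. \<epsilon> (n - 1 - i) * (comp_deriv (take i js) (\<theta> j x))\<^sup>2) * (\<theta>' j x)\<^sup>2 + \<epsilon> n * M0"
    using IH by linarith
  also have "\<dots> = M0 * (\<Sum>i<length (j # js). \<epsilon> (length (j # js) - 1 - i) * (comp_deriv (take i (j # js)) x)\<^sup>2)"
    unfolding length_Cons n_def[symmetric] sum.lessThan_Suc_shift
    by (simp add: sum_distrib_left sum_distrib_right power_mult_distrib algebra_simps)
  finally show ?case .
qed simp

lemma abs_comp_deriv2_le:
  assumes "set w \<subseteq> B" "x \<in> H"
  shows "\<bar>comp_deriv2 w x\<bar> \<le> M0 * (\<Sum>i<length w. \<epsilon> (length w - 1 - i) * (\<epsilon> i)\<^sup>2)"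
proof -
  have "(comp_deriv (take i w) x)\<^sup>2 \<le> (\<epsilon> i)\<^sup>2" if "i < length w" for i
    using comp_deriv_sq_le_eps_sq[of "take i w" x] assms that by (auto dest: in_set_takeD)
  then have "(\<Sum>i<length w. \<epsilon> (length w - 1 - i) * (comp_deriv (take i w) x)\<^sup>2)
      \<le> (\<Sum>i<length w. \<epsilon> (length w - 1 - i) * (\<epsilon> i)\<^sup>2)"
    by (intro sum_mono mult_left_mono eps_nonneg) auto
  then show ?thesis
    using abs_comp_deriv2_le_sum[OF assms] bound_constants_nonneg(3) by (meson mult_left_mono order_trans)
qed

lemma abs_ln_b_comp'_le:
  assumes "set w \<subseteq> B" "x \<in> H"
  shows "\<bar>ln_b_comp' w x\<bar> \<le> C1 * S"
proof -
  have "\<bar>ln_b_comp' w x\<bar> \<le> (\<Sum>k<length w. C1 * \<epsilon> k)"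
    unfolding ln_b_comp'_def
  proof (rule order_trans[OF sum_abs sum_mono])
    fix k assume "k \<in> {..<length w}"
    then have "w!k \<in> B" "set (take k w) \<subseteq> B" "theta_comp \<theta> (take k w) x \<in> H" "length (take k w) = k"
      using assms by (auto dest: in_set_takeD intro: theta_comp_in_H)
    then show "\<bar>ln_b' (w!k) (theta_comp \<theta> (take k w) x) * comp_deriv (take k w) x\<bar> \<le> C1 * \<epsilon> k"
      unfolding abs_mult using bound_constants_nonneg assms(2)
      by (metis abs_ge_zero abs_comp_deriv_le_eps abs_ln_b'_le mult_mono)
  qed
  also have "\<dots> \<le> C1 * S"
    using partial_sums_eps_le(1) bound_constants_nonneg by (simp add: mult_left_mono flip: sum_distrib_left)
  finally show ?thesis .
qed

lemma ln_b_comp''_term_bounds: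
  assumes "set w \<subseteq> B" "x \<in> H" "k < length w"
  defines "z \<equiv> theta_comp \<theta> (take k w) x" and "p \<equiv> take k w"
  shows "- (C1\<^sup>2 + C2) * (\<epsilon> k)\<^sup>2 \<le> ln_b'' (w!k) z * (comp_deriv p x)\<^sup>2"
    and "ln_b'' (w!k) z * (comp_deriv p x)\<^sup>2 \<le> C2 * (\<epsilon> k)\<^sup>2"
    and "\<bar>ln_b' (w!k) z * comp_deriv2 p x\<bar> \<le> C1 * M0 * (\<Sum>i<k. \<epsilon> (k - 1 - i) * (\<epsilon> i)\<^sup>2)"
proof -
  have \<beta>: "w!k \<in> B" and p: "set p \<subseteq> B" "length p = k" and z: "z \<in> H"
    using assms by (auto simp: p_def z_def dest: in_set_takeD intro: theta_comp_in_H)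
  have sq: "0 \<le> (comp_deriv p x)\<^sup>2" "(comp_deriv p x)\<^sup>2 \<le> (\<epsilon> k)\<^sup>2"
    using comp_deriv_sq_le_eps_sq[OF p(1) assms(2)] p(2) by auto
  note ln_b'' = ln_b''_bounds[OF \<beta> z]
  have "- (C1\<^sup>2 + C2) * (\<epsilon> k)\<^sup>2 \<le> - (C1\<^sup>2 + C2) * (comp_deriv p x)\<^sup>2"
    by (intro mult_left_mono_neg sq(2)) (use bound_constants_nonneg(2) zero_le_power2[of C1] in linarith)
  also have "\<dots> \<le> ln_b'' (w!k) z * (comp_deriv p x)\<^sup>2"
    using ln_b''(1) sq(1) by (rule mult_right_mono)
  finally show "- (C1\<^sup>2 + C2) * (\<epsilon> k)\<^sup>2 \<le> ln_b'' (w!k) z * (comp_deriv p x)\<^sup>2" .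
  have "ln_b'' (w!k) z * (comp_deriv p x)\<^sup>2 \<le> C2 * (comp_deriv p x)\<^sup>2"
    using ln_b''(2) sq(1) by (rule mult_right_mono)
  also have "\<dots> \<le> C2 * (\<epsilon> k)\<^sup>2" using sq(2) bound_constants_nonneg(2) by (rule mult_left_mono)
  finally show "ln_b'' (w!k) z * (comp_deriv p x)\<^sup>2 \<le> C2 * (\<epsilon> k)\<^sup>2" .
  show "\<bar>ln_b' (w!k) z * comp_deriv2 p x\<bar> \<le> C1 * M0 * (\<Sum>i<k. \<epsilon> (k - 1 - i) * (\<epsilon> i)\<^sup>2)"
    using abs_ln_b'_le[OF \<beta> z] abs_comp_deriv2_le[OF p(1) assms(2)] p(2) bound_constants_nonneg
    unfolding abs_mult mult.assoc by (intro mult_mono) auto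
qed

lemma ln_b_comp''_bounds:
  assumes w: "set w \<subseteq> B" and x: "x \<in> H"
  shows "- (C1\<^sup>2 + C2) * S2 - C1 * M0 * (S * S2) \<le> ln_b_comp'' w x"
    and "ln_b_comp'' w x \<le> C2 * S2 + C1 * M0 * (S * S2)"
proof -
  define n where "n = length w"
  define A where "A = (\<Sum>k<n. ln_b'' (w!k) (theta_comp \<theta> (take k w) x) * (comp_deriv (take k w) x)\<^sup>2)"
  define R where "R = (\<Sum>k<n. ln_b' (w!k) (theta_comp \<theta> (take k w) x) * comp_deriv2 (take k w) x)"
  note bound = ln_b_comp''_term_bounds[OF w x, folded n_def]
  have split: "ln_b_comp'' w x = A + R" by (simp add: ln_b_comp''_def A_def R_def n_def sum.distrib)
  have R: "\<bar>R\<bar> \<le> C1 * M0 * (S * S2)"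
  proof -
    have "\<bar>R\<bar> \<le> (\<Sum>k<n. C1 * M0 * (\<Sum>i<k. \<epsilon> (k - 1 - i) * (\<epsilon> i)\<^sup>2))"
      unfolding R_def by (rule order_trans[OF sum_abs sum_mono]) (use bound(3) in auto)
    also have "\<dots> = C1 * M0 * (\<Sum>k<n. \<Sum>i<k. \<epsilon> (k - 1 - i) * (\<epsilon> i)\<^sup>2)"
      by (rule sum_distrib_left[symmetric])
    also have "\<dots> \<le> C1 * M0 * ((\<Sum>k<n. \<epsilon> k) * (\<Sum>k<n. (\<epsilon> k)\<^sup>2))"
      using bound_constants_nonneg by (intro mult_left_mono sum_convolution_le eps_nonneg) auto
    also have "\<dots> \<le> C1 * M0 * (S * S2)"
      using bound_constants_nonneg partial_sums_eps_le eps_nonneg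
      by (intro mult_left_mono mult_mono sum_nonneg) auto
    finally show ?thesis .
  qed
  have A_lower: "- (C1\<^sup>2 + C2) * S2 \<le> A"
  proof -
    have "- (C1\<^sup>2 + C2) * S2 \<le> - (C1\<^sup>2 + C2) * (\<Sum>k<n. (\<epsilon> k)\<^sup>2)"
      by (intro mult_left_mono_neg partial_sums_eps_le(2))
        (use bound_constants_nonneg(2) zero_le_power2[of C1] in linarith)
    also have "\<dots> \<le> A"
      unfolding A_def sum_distrib_left by (rule sum_mono) (use bound(1) in auto)
    finally show ?thesis .
  qed
  have A_upper: "A \<le> C2 * S2"
  proof -
    have "A \<le> C2 * (\<Sum>k<n. (\<epsilon> k)\<^sup>2)"
      unfolding A_def sum_distrib_left by (rule sum_mono) (use bound(2) in auto)
    also have "\<dots> \<le> C2 * S2" using partial_sums_eps_le(2) bound_constants_nonneg(2) by (rule mult_left_mono)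
    finally show ?thesis .
  qed
  show "- (C1\<^sup>2 + C2) * S2 - C1 * M0 * (S * S2) \<le> ln_b_comp'' w x"
    and "ln_b_comp'' w x \<le> C2 * S2 + C1 * M0 * (S * S2)"
    using split A_lower A_upper abs_le_D1[OF R] abs_le_D2[OF R] by linarith+
qed

lemma powr_second_derivative_factor_bounds:
  assumes "0 < s" "set w \<subseteq> B" "x \<in> H"
  shows "- s * S2 * (C1\<^sup>2 + C2 + C1 * M0 * S) \<le> s * ln_b_comp'' w x + s\<^sup>2 * (ln_b_comp' w x)\<^sup>2"
    and "s * ln_b_comp'' w x + s\<^sup>2 * (ln_b_comp' w x)\<^sup>2 \<le> s\<^sup>2 * C1\<^sup>2 * S\<^sup>2 + s * S2 * (C2 + C1 * M0 * S)"
proof -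
  note L2 = ln_b_comp''_bounds[OF assms(2,3)]
  have "(ln_b_comp' w x)\<^sup>2 \<le> (C1 * S)\<^sup>2"
    using abs_ln_b_comp'_le[OF assms(2,3)] by (metis abs_ge_zero power2_abs power_mono)
  then have "s\<^sup>2 * (ln_b_comp' w x)\<^sup>2 \<le> s\<^sup>2 * C1\<^sup>2 * S\<^sup>2"
    by (simp add: mult_left_mono power_mult_distrib mult.assoc)
  moreover have "s * ln_b_comp'' w x \<le> s * S2 * (C2 + C1 * M0 * S)"
    using mult_left_mono[OF L2(2), of s] \<open>0 < s\<close> by (simp add: algebra_simps)
  ultimately show "s * ln_b_comp'' w x + s\<^sup>2 * (ln_b_comp' w x)\<^sup>2 \<le> s\<^sup>2 * C1\<^sup>2 * S\<^sup>2 + s * S2 * (C2 + C1 * M0 * S)"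
    by linarith
  have "- s * S2 * (C1\<^sup>2 + C2 + C1 * M0 * S) \<le> s * ln_b_comp'' w x"
    using mult_left_mono[OF L2(1), of s] \<open>0 < s\<close> by (simp add: algebra_simps)
  then show "- s * S2 * (C1\<^sup>2 + C2 + C1 * M0 * S) \<le> s * ln_b_comp'' w x + s\<^sup>2 * (ln_b_comp' w x)\<^sup>2"
    using zero_le_power2[of "s * ln_b_comp' w x"] unfolding power_mult_distrib by linarith
qed

lemma powr_b_comp_second_derivative_bounds:
  assumes s: "0 < s" and w: "set w \<subseteq> B" and "c < d" "{c<..<d} \<subseteq> H" and x: "x \<in> {c..d}"
    and F1: "\<forall>y\<in>{c..d}. ((\<lambda>z. b_comp b \<theta> w z powr s) has_real_derivative F1 y) (at y within {c..d})"
    and F2: "\<forall>y\<in>{c..d}. (F1 has_real_derivative F2 y) (at y within {c..d})"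
  shows "F2 x / b_comp b \<theta> w x powr s \<le> s\<^sup>2 * C1\<^sup>2 * S\<^sup>2 + s * S2 * (C2 + C1 * M0 * S)"
    and "- s * S2 * (C1\<^sup>2 + C2 + C1 * M0 * S) \<le> F2 x / b_comp b \<theta> w x powr s"
proof -
  define P where "P z = b_comp b \<theta> w z powr s" for z
  define U where "U = s\<^sup>2 * C1\<^sup>2 * S\<^sup>2 + s * S2 * (C2 + C1 * M0 * S)"
  define Lo where "Lo = - s * S2 * (C1\<^sup>2 + C2 + C1 * M0 * S)"
  have interior: "Lo * P \<xi> \<le> F2 \<xi> \<and> F2 \<xi> \<le> U * P \<xi>" if \<xi>: "\<xi> \<in> {c<..<d}" for \<xi>
  proof -
    have "\<xi> \<in> H" using \<xi> \<open>{c<..<d} \<subseteq> H\<close> by blast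
    have F2_eq: "F2 \<xi> = (s * ln_b_comp'' w \<xi> + s\<^sup>2 * (ln_b_comp' w \<xi>)\<^sup>2) * P \<xi>"
      unfolding P_def
    proof (rule powr_b_comp_second_derivative[OF open_greaterThanLessThan \<open>{c<..<d} \<subseteq> H\<close> \<xi> w])
      show "((\<lambda>z. b_comp b \<theta> w z powr s) has_real_derivative F1 y) (at y)" if "y \<in> {c<..<d}" for y
        using F1[rule_format, of y] that at_within_Icc_at[of c y d] by simp
      show "(F1 has_real_derivative F2 \<xi>) (at \<xi>)"
        using F2[rule_format, of \<xi>] \<xi> at_within_Icc_at[of c \<xi> d] by simp
    qed
    have "0 \<le> P \<xi>" by (simp add: P_def)
    moreover note powr_second_derivative_factor_bounds[OF s w \<open>\<xi> \<in> H\<close>, folded U_def Lo_def]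
    ultimately show ?thesis unfolding F2_eq by (auto intro: mult_right_mono)
  qed
  have P_cont: "continuous (at x within {c..d}) P"
    using F1 x unfolding P_def by (blast intro: DERIV_continuous)
  have "continuous (at x within {c..d}) (\<lambda>z. U * P z)"
    and "continuous (at x within {c..d}) (\<lambda>z. - Lo * P z)"
    by (intro continuous_mult continuous_const P_cont)+
  have "F2 x \<le> U * P x"
    by (rule has_real_derivative_le_on_Icc[OF \<open>c < d\<close> x, of F1])
      (use F2 interior \<open>continuous (at x within {c..d}) (\<lambda>z. U * P z)\<close> in auto)
  moreover have "- F2 x \<le> - Lo * P x"
    by (rule has_real_derivative_le_on_Icc[OF \<open>c < d\<close> x, of "\<lambda>z. - F1 z"])
      (use F2 interior \<open>continuous (at x within {c..d}) (\<lambda>z. - Lo * P z)\<close>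
        in \<open>auto intro: DERIV_minus\<close>)
  moreover have "0 \<le> U" "Lo \<le> 0" "0 \<le> P x"
    using s bound_constants_nonneg by (auto simp: U_def Lo_def P_def)
  ultimately show "F2 x / b_comp b \<theta> w x powr s \<le> U" "Lo \<le> F2 x / b_comp b \<theta> w x powr s"
    unfolding P_def[symmetric]
    by (cases "P x = 0"; simp add: divide_le_eq le_divide_eq)+
qed

end

section \<open>Unions of disjoint intervals\<close>

lemma Cm_bar_second_derivatives:
  assumes "\<forall>\<beta>\<in>B. Cm_bar m H (f \<beta>)" "2 \<le> m"
  obtains f' f'' where
    "\<And>\<beta> x. \<beta> \<in> B \<Longrightarrow> x \<in> H \<Longrightarrow> (f \<beta> has_real_derivative f' \<beta> x) (at x)"
    "\<And>\<beta> x. \<beta> \<in> B \<Longrightarrow> x \<in> H \<Longrightarrow> (f' \<beta> has_real_derivative f'' \<beta> x) (at x)"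
    "\<And>\<beta>. \<beta> \<in> B \<Longrightarrow> continuous_on (closure H) (f \<beta>)"
    "\<And>\<beta>. \<beta> \<in> B \<Longrightarrow> continuous_on (closure H) (f' \<beta>)"
    "\<And>\<beta>. \<beta> \<in> B \<Longrightarrow> continuous_on (closure H) (f'' \<beta>)"
proof -
  obtain g where g: "\<forall>\<beta>\<in>B. g \<beta> 0 = f \<beta> \<and>
      (\<forall>k<m. \<forall>x\<in>H. (g \<beta> k has_real_derivative g \<beta> (Suc k) x) (at x)) \<and>
      (\<forall>k\<le>m. continuous_on (closure H) (g \<beta> k))"
    using bchoice[OF assms(1)[unfolded Cm_bar_def]] by blast
  have d: "(g \<beta> k has_real_derivative g \<beta> (Suc k) x) (at x)" if "\<beta> \<in> B" "x \<in> H" "k < 2" for \<beta> x k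
    using g that assms(2) by auto
  have c: "continuous_on (closure H) (g \<beta> k)" if "\<beta> \<in> B" "k \<le> 2" for \<beta> k
    using g that assms(2) by auto
  have g0: "g \<beta> 0 = f \<beta>" if "\<beta> \<in> B" for \<beta> using g that by auto
  show ?thesis
    by (rule that[of "\<lambda>\<beta>. g \<beta> 1" "\<lambda>\<beta>. g \<beta> 2"])
      (use g0 d[of _ _ 0] d[of _ _ 1] c[of _ 0] c[of _ 1] c[of _ 2] in \<open>auto simp: numeral_2_eq_2\<close>)
qed

lemma closure_union_intervals_cases:
  assumes "\<forall>j\<in>{1..n}. c j < d j" and "x \<in> closure (union_intervals n c d)"
  obtains a b where "a < b" "x \<in> {a..b}" "{a<..<b} \<subseteq> union_intervals n c d"
    "{a..b} \<subseteq> closure (union_intervals n c d)"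
proof -
  have "closure (union_intervals n c d) \<subseteq> (\<Union>j\<in>{1..n}. {c j..d j})"
    unfolding union_intervals_def by (rule closure_minimal) auto
  then obtain j where j: "j \<in> {1..n}" "x \<in> {c j..d j}" using assms(2) by blast
  have sub: "{c j<..<d j} \<subseteq> union_intervals n c d" using j(1) unfolding union_intervals_def by blast
  then have "closure {c j<..<d j} \<subseteq> closure (union_intervals n c d)" by (rule closure_mono)
  then show ?thesis using that[OF _ j(2) sub] assms(1) j(1) by simp
qed

lemma union_intervals_close_points:
  assumes cd: "\<forall>j\<in>{1..n}. c j < d j"
    and disj: "\<forall>i\<in>{1..n}. \<forall>j\<in>{1..n}. i \<noteq> j \<longrightarrow> {c i..d i} \<inter> {c j..d j} = {}"
  obtains \<delta> :: real where "\<delta> > 0" "\<And>x y. x \<in> union_intervals n c d \<Longrightarrow> y \<in> union_intervals n c d \<Longrightarrow>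
      \<bar>x - y\<bar> < \<delta> \<Longrightarrow> \<exists>j\<in>{1..n}. x \<in> {c j<..<d j} \<and> y \<in> {c j<..<d j}"
proof -
  define D where "D = {(i, j) \<in> {1..n} \<times> {1..n}. i \<noteq> j}"
  define \<delta> where "\<delta> = Min (insert 1 ((\<lambda>(i, j). setdist {c i..d i} {c j..d j}) ` D))"
  have "finite D" unfolding D_def by (rule finite_subset[of _ "{1..n} \<times> {1..n}"]) auto
  have gap: "0 < setdist {c i..d i} {c j..d j}" if "(i, j) \<in> D" for i j
  proof -
    have "{c i..d i} \<noteq> {}" "{c j..d j} \<noteq> {}" "{c i..d i} \<inter> {c j..d j} = {}"
      using that cd disj by (auto simp: D_def less_imp_le)
    then show ?thesis using setdist_gt_0_compact_closed[OF compact_Icc closed_atLeastAtMost] by blast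
  qed
  have "\<delta> > 0" using \<open>finite D\<close> gap by (auto simp: \<delta>_def)
  moreover have "\<exists>j\<in>{1..n}. x \<in> {c j<..<d j} \<and> y \<in> {c j<..<d j}"
    if xy: "x \<in> union_intervals n c d" "y \<in> union_intervals n c d" "\<bar>x - y\<bar> < \<delta>" for x y
  proof -
    obtain i j where ij: "i \<in> {1..n}" "x \<in> {c i<..<d i}" "j \<in> {1..n}" "y \<in> {c j<..<d j}"
      using xy(1,2) unfolding union_intervals_def by blast
    have "i = j"
    proof (rule ccontr)
      assume "i \<noteq> j"
      then have "(i, j) \<in> D" using ij by (simp add: D_def)
      then have "\<delta> \<le> setdist {c i..d i} {c j..d j}"
        unfolding \<delta>_def using \<open>finite D\<close> by (intro Min_le) auto
      also have "\<dots> \<le> \<bar>x - y\<bar>" using ij setdist_le_dist[of x "{c i..d i}" y] by (simp add: dist_real_def)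
      finally show False using xy(3) by simp
    qed
    then show ?thesis using ij by blast
  qed
  ultimately show ?thesis using that by blast
qed

(* Points closer than the gap between the intervals lie in one interval, where the derivative bound
   applies; for points farther apart the bound on f suffices. *)
lemma lipschitz_on_union_intervals:
  fixes f f' :: "real \<Rightarrow> real"
  assumes cd: "\<forall>j\<in>{1..n}. c j < d j"
    and disj: "\<forall>i\<in>{1..n}. \<forall>j\<in>{1..n}. i \<noteq> j \<longrightarrow> {c i..d i} \<inter> {c j..d j} = {}"
    and f_bound: "\<And>x. x \<in> union_intervals n c d \<Longrightarrow> \<bar>f x\<bar> \<le> A"
    and f': "\<And>x. x \<in> union_intervals n c d \<Longrightarrow> (f has_real_derivative f' x) (at x)"
    and f'_bound: "\<And>x. x \<in> union_intervals n c d \<Longrightarrow> \<bar>f' x\<bar> \<le> A'"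
  shows "\<exists>L. L-lipschitz_on (union_intervals n c d) f"
proof -
  obtain \<delta> where "\<delta> > 0" and \<delta>: "\<And>x y. x \<in> union_intervals n c d \<Longrightarrow> y \<in> union_intervals n c d \<Longrightarrow>
      \<bar>x - y\<bar> < \<delta> \<Longrightarrow> \<exists>j\<in>{1..n}. x \<in> {c j<..<d j} \<and> y \<in> {c j<..<d j}"
    using union_intervals_close_points[OF cd disj] by blast
  define L where "L = \<bar>A'\<bar> + 2 * \<bar>A\<bar> / \<delta>"
  have "\<bar>f x - f y\<bar> \<le> L * \<bar>x - y\<bar>"
    if x: "x \<in> union_intervals n c d" and y: "y \<in> union_intervals n c d" for x y
  proof (cases "\<bar>x - y\<bar> < \<delta>")
    case True
    then obtain j where j: "j \<in> {1..n}" "x \<in> {c j<..<d j}" "y \<in> {c j<..<d j}" using \<delta> x y by blast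
    then have sub: "{c j<..<d j} \<subseteq> union_intervals n c d" unfolding union_intervals_def by blast
    have "(f has_real_derivative f' z) (at z within {c j<..<d j})" if "z \<in> {c j<..<d j}" for z
      using f' sub that by (blast intro: has_field_derivative_at_within)
    then have "norm (f x - f y) \<le> A' * norm (x - y)"
      by (intro field_differentiable_bound[of "{c j<..<d j}" f f']) (use j sub f'_bound in auto)
    also have "\<dots> \<le> L * norm (x - y)"
    proof (rule mult_right_mono)
      have "0 \<le> 2 * \<bar>A\<bar> / \<delta>" using \<open>\<delta> > 0\<close> by simp
      then show "A' \<le> L" unfolding L_def by linarith
    qed simp
    finally show ?thesis by simp
  next
    case False
    have "\<bar>f x - f y\<bar> \<le> 2 * \<bar>A\<bar>" using f_bound[OF x] f_bound[OF y] by linarith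
    also have "\<dots> = (2 * \<bar>A\<bar> / \<delta>) * \<delta>" using \<open>\<delta> > 0\<close> by simp
    also have "\<dots> \<le> L * \<bar>x - y\<bar>"
      using False \<open>\<delta> > 0\<close> by (intro mult_mono) (auto simp: L_def)
    finally show ?thesis .
  qed
  moreover have "0 \<le> L" using \<open>\<delta> > 0\<close> by (simp add: L_def)
  ultimately show ?thesis by (auto simp: lipschitz_on_def dist_real_def)
qed

lemma union_intervals_bounded_weighted_ifs:
  fixes n :: nat and c d :: "nat \<Rightarrow> real" and B :: "'b set" and b \<theta> :: "'b \<Rightarrow> real \<Rightarrow> real"
  defines "H \<equiv> union_intervals n c d"
  assumes cd: "\<forall>j\<in>{1..n}. c j < d j"
    and disj: "\<forall>i\<in>{1..n}. \<forall>j\<in>{1..n}. i \<noteq> j \<longrightarrow> {c i..d i} \<inter> {c j..d j} = {}"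
    and finB: "finite B" and m2: "2 \<le> m"
    and b_Cm: "\<forall>\<beta>\<in>B. Cm_bar m H (b \<beta>)" and \<theta>_Cm: "\<forall>\<beta>\<in>B. Cm_bar m H (\<theta> \<beta>)"
    and b_pos_closure: "\<forall>\<beta>\<in>B. \<forall>x\<in>closure H. b \<beta> x > 0"
    and \<theta>_maps: "\<forall>\<beta>\<in>B. \<theta> \<beta> ` H \<subseteq> H"
    and contr: "\<exists>\<mu>::nat. \<exists>\<kappa>::real. \<mu> \<ge> 1 \<and> \<kappa> < 1 \<and>
       (\<forall>w\<in>words B \<mu>. \<forall>x\<in>closure H. \<forall>y\<in>closure H.
          \<bar>theta_comp \<theta> w x - theta_comp \<theta> w y\<bar> \<le> \<kappa> * \<bar>x - y\<bar>)"
    and "B \<noteq> {}" "H \<noteq> {}"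
  obtains \<theta>' \<theta>'' b' b'' L where
    "bounded_weighted_ifs B H \<theta> \<theta>' \<theta>'' b b' b'' L (const_C1 B b H) (const_C2 B b H) (const_M0 B \<theta> H)"
proof -
  have "open H" unfolding H_def union_intervals_def by auto
  have K: "compact (closure H)" "H \<subseteq> closure H"
    unfolding H_def union_intervals_def by (simp_all add: bounded_UN closure_subset)
  obtain \<theta>' \<theta>'' where \<theta>':
    "\<And>\<beta> x. \<beta> \<in> B \<Longrightarrow> x \<in> H \<Longrightarrow> (\<theta> \<beta> has_real_derivative \<theta>' \<beta> x) (at x)"
    "\<And>\<beta> x. \<beta> \<in> B \<Longrightarrow> x \<in> H \<Longrightarrow> (\<theta>' \<beta> has_real_derivative \<theta>'' \<beta> x) (at x)"
    "\<And>\<beta>. \<beta> \<in> B \<Longrightarrow> continuous_on (closure H) (\<theta> \<beta>)"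
    "\<And>\<beta>. \<beta> \<in> B \<Longrightarrow> continuous_on (closure H) (\<theta>' \<beta>)"
    "\<And>\<beta>. \<beta> \<in> B \<Longrightarrow> continuous_on (closure H) (\<theta>'' \<beta>)"
    using Cm_bar_second_derivatives[OF \<theta>_Cm m2] by blast
  obtain b' b'' where b':
    "\<And>\<beta> x. \<beta> \<in> B \<Longrightarrow> x \<in> H \<Longrightarrow> (b \<beta> has_real_derivative b' \<beta> x) (at x)"
    "\<And>\<beta> x. \<beta> \<in> B \<Longrightarrow> x \<in> H \<Longrightarrow> (b' \<beta> has_real_derivative b'' \<beta> x) (at x)"
    "\<And>\<beta>. \<beta> \<in> B \<Longrightarrow> continuous_on (closure H) (b \<beta>)"
    "\<And>\<beta>. \<beta> \<in> B \<Longrightarrow> continuous_on (closure H) (b' \<beta>)"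
    "\<And>\<beta>. \<beta> \<in> B \<Longrightarrow> continuous_on (closure H) (b'' \<beta>)"
    using Cm_bar_second_derivatives[OF b_Cm m2] by blast
  interpret smooth_weighted_ifs B H \<theta> \<theta>' \<theta>'' b b' b''
    by unfold_locales (use \<open>open H\<close> \<theta>_maps \<theta>' b' b_pos_closure K(2) in auto)
  have "\<exists>L. L-lipschitz_on H (\<theta> \<beta>)" if \<beta>: "\<beta> \<in> B" for \<beta>
  proof -
    obtain A where "\<And>x. x \<in> closure H \<Longrightarrow> norm (\<theta> \<beta> x) \<le> A"
      using continuous_on_compact_bound[OF K(1) \<theta>'(3)[OF \<beta>]] by blast
    moreover obtain A' where "\<And>x. x \<in> closure H \<Longrightarrow> norm (\<theta>' \<beta> x) \<le> A'"
      using continuous_on_compact_bound[OF K(1) \<theta>'(4)[OF \<beta>]] by blast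
    ultimately show ?thesis unfolding H_def
      by (intro lipschitz_on_union_intervals[OF cd disj, where A = A and f' = "\<theta>' \<beta>" and A' = A'])
        (use \<theta>'(1) K(2) \<beta> in \<open>auto simp: H_def\<close>)
  qed
  then obtain Lf where Lf: "\<And>\<beta>. \<beta> \<in> B \<Longrightarrow> (Lf \<beta>)-lipschitz_on H (\<theta> \<beta>)" by metis
  define L where "L = (\<Sum>\<beta>\<in>B. Lf \<beta>)"
  have "L-lipschitz_on H (\<theta> \<beta>)" if "\<beta> \<in> B" for \<beta>
  proof (rule lipschitz_on_le[OF Lf[OF that]])
    show "Lf \<beta> \<le> L"
      unfolding L_def using finB that Lf lipschitz_on_nonneg by (intro member_le_sum) auto
  qed
  then interpret lipschitz_ifs B H \<theta> L
    by unfold_locales (use \<open>B \<noteq> {}\<close> \<open>H \<noteq> {}\<close> in auto)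
  obtain \<mu> \<kappa> where "1 \<le> \<mu>" "\<kappa> < 1" and contraction: "\<forall>w\<in>words B \<mu>. \<forall>x\<in>closure H. \<forall>y\<in>closure H.
      \<bar>theta_comp \<theta> w x - theta_comp \<theta> w y\<bar> \<le> \<kappa> * \<bar>x - y\<bar>"
    using contr by blast
  have "summable (eps B \<theta> H)"
    using contraction K(2) by (intro contraction_imp_summable_eps[OF \<open>1 \<le> \<mu>\<close> \<open>\<kappa> < 1\<close>]) blast
  have b_nonzero: "b \<beta> y \<noteq> 0" if "\<beta> \<in> B" "y \<in> closure H" for \<beta> y
    using b_pos_closure that by force
  show ?thesis
  proof (rule that, unfold_locales)
    fix \<beta> x assume \<beta>: "\<beta> \<in> B" and x: "x \<in> H"
    note b_derivs = deriv_eq_on_open[OF \<open>open H\<close> _ b'(1,2)]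
    note \<theta>_derivs = deriv_eq_on_open[OF \<open>open H\<close> _ \<theta>'(1,2)]
    have "\<bar>deriv (b \<beta>) x\<bar> / b \<beta> x \<le> const_C1 B b H"
      unfolding const_C1_def
      by (rule le_Sup_continuous_family[OF finB K _ _ \<beta> x,
            where f = "\<lambda>\<beta> x. \<bar>deriv (b \<beta>) x\<bar> / b \<beta> x" and g = "\<lambda>\<beta> x. \<bar>b' \<beta> x\<bar> / b \<beta> x"])
        (auto simp: b_derivs b_nonzero intro!: continuous_intros b'(3,4))
    then show "\<bar>b' \<beta> x\<bar> / b \<beta> x \<le> const_C1 B b H" by (simp add: b_derivs \<beta> x)
    have "\<bar>deriv (deriv (b \<beta>)) x\<bar> / b \<beta> x \<le> const_C2 B b H"
      unfolding const_C2_def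
      by (rule le_Sup_continuous_family[OF finB K _ _ \<beta> x,
            where f = "\<lambda>\<beta> x. \<bar>deriv (deriv (b \<beta>)) x\<bar> / b \<beta> x" and g = "\<lambda>\<beta> x. \<bar>b'' \<beta> x\<bar> / b \<beta> x"])
        (auto simp: b_derivs b_nonzero intro!: continuous_intros b'(3,5))
    then show "\<bar>b'' \<beta> x\<bar> / b \<beta> x \<le> const_C2 B b H" by (simp add: b_derivs \<beta> x)
    have "\<bar>deriv (deriv (\<theta> \<beta>)) x\<bar> \<le> const_M0 B \<theta> H"
      unfolding const_M0_def
      by (rule le_Sup_continuous_family[OF finB K _ _ \<beta> x,
            where f = "\<lambda>\<beta> x. \<bar>deriv (deriv (\<theta> \<beta>)) x\<bar>" and g = "\<lambda>\<beta> x. \<bar>\<theta>'' \<beta> x\<bar>"])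
        (auto simp: \<theta>_derivs intro!: continuous_intros \<theta>'(5))
    then show "\<bar>\<theta>'' \<beta> x\<bar> \<le> const_M0 B \<theta> H" by (simp add: \<theta>_derivs \<beta> x)
  qed fact
qed

theorem lemma6p3:
  fixes n m :: nat and c d :: "nat \<Rightarrow> real" and B :: "'b set"
    and b \<theta> :: "'b \<Rightarrow> real \<Rightarrow> real" and s :: real
  assumes cd: "\<forall>j\<in>{1..n}. c j < d j"
    and disj: "\<forall>i\<in>{1..n}. \<forall>j\<in>{1..n}. i \<noteq> j \<longrightarrow> {c i..d i} \<inter> {c j..d j} = {}"
    and finB: "finite B"
    and m2: "m \<ge> 2"
    and b_Cm: "\<forall>\<beta>\<in>B. Cm_bar m (union_intervals n c d) (b \<beta>)"
    and th_Cm: "\<forall>\<beta>\<in>B. Cm_bar m (union_intervals n c d) (\<theta> \<beta>)"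
    and b_pos: "\<forall>\<beta>\<in>B. \<forall>x\<in>closure (union_intervals n c d). b \<beta> x > 0"
    and th_maps: "\<forall>\<beta>\<in>B. \<theta> \<beta> ` union_intervals n c d \<subseteq> union_intervals n c d"
    and contr: "\<exists>\<mu>::nat. \<exists>\<kappa>::real. \<mu> \<ge> 1 \<and> \<kappa> < 1 \<and>
       (\<forall>w\<in>words B \<mu>. \<forall>x\<in>closure (union_intervals n c d). \<forall>y\<in>closure (union_intervals n c d).
          \<bar>theta_comp \<theta> w x - theta_comp \<theta> w y\<bar> \<le> \<kappa> * \<bar>x - y\<bar>)"
    and s_pos: "s > 0"
  shows "\<forall>\<nu>\<ge>1. \<forall>w\<in>words B \<nu>. \<forall>x\<in>closure (union_intervals n c d).
     \<forall>F1 F2 :: real \<Rightarrow> real.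
       (\<forall>y\<in>closure (union_intervals n c d).
          ((\<lambda>z. b_comp b \<theta> w z powr s) has_real_derivative F1 y) (at y within closure (union_intervals n c d))) \<and>
       (\<forall>y\<in>closure (union_intervals n c d).
          (F1 has_real_derivative F2 y) (at y within closure (union_intervals n c d)))
       \<longrightarrow>
       F2 x / b_comp b \<theta> w x powr s
         \<le> s\<^sup>2 * (const_C1 B b (union_intervals n c d))\<^sup>2 * (\<Sum>k. eps B \<theta> (union_intervals n c d) k)\<^sup>2
           + s * (\<Sum>k. (eps B \<theta> (union_intervals n c d) k)\<^sup>2)
               * (const_C2 B b (union_intervals n c d)
                  + const_C1 B b (union_intervals n c d) * const_M0 B \<theta> (union_intervals n c d)
                    * (\<Sum>k. eps B \<theta> (union_intervals n c d) k))
       \<and>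
       F2 x / b_comp b \<theta> w x powr s
         \<ge> - s * (\<Sum>k. (eps B \<theta> (union_intervals n c d) k)\<^sup>2)
               * ((const_C1 B b (union_intervals n c d))\<^sup>2 + const_C2 B b (union_intervals n c d)
                  + const_C1 B b (union_intervals n c d) * const_M0 B \<theta> (union_intervals n c d)
                    * (\<Sum>k. eps B \<theta> (union_intervals n c d) k))"
proof (intro allI impI ballI, goal_cases)
  case (1 \<nu> w x F1 F2)
  then have w: "set w \<subseteq> B" "w \<noteq> []" and x: "x \<in> closure (union_intervals n c d)"
    by (auto simp: words_def)
  then have "B \<noteq> {}" "union_intervals n c d \<noteq> {}" by (auto simp: neq_Nil_conv)
  then obtain \<theta>' \<theta>'' b' b'' L where "bounded_weighted_ifs B (union_intervals n c d) \<theta> \<theta>' \<theta>'' b b' b'' L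
      (const_C1 B b (union_intervals n c d)) (const_C2 B b (union_intervals n c d))
      (const_M0 B \<theta> (union_intervals n c d))"
    using union_intervals_bounded_weighted_ifs[OF cd disj finB m2 b_Cm th_Cm b_pos th_maps contr] by blast
  then interpret bounded_weighted_ifs B "union_intervals n c d" \<theta> \<theta>' \<theta>'' b b' b'' L
      "const_C1 B b (union_intervals n c d)" "const_C2 B b (union_intervals n c d)"
      "const_M0 B \<theta> (union_intervals n c d)" .
  obtain l r where lr: "l < r" "x \<in> {l..r}" "{l<..<r} \<subseteq> union_intervals n c d"
    "{l..r} \<subseteq> closure (union_intervals n c d)"
    using closure_union_intervals_cases[OF cd x] .
  have "\<forall>y\<in>{l..r}. ((\<lambda>z. b_comp b \<theta> w z powr s) has_real_derivative F1 y) (at y within {l..r})"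
    and "\<forall>y\<in>{l..r}. (F1 has_real_derivative F2 y) (at y within {l..r})"
    using 1 lr(4) by (blast intro: has_field_derivative_subset)+
  from powr_b_comp_second_derivative_bounds[OF s_pos w(1) lr(1,3,2) this] show ?case by simp
qed

end
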